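(* Let $(V,E,c,p)$ be a PCSTP instance with $s:=|T_p|\ge 2$, let $H$ be a terminal-regions decomposition, and enumerate $T_p=\{t_1,\dots,t_s\}$ so that $r^{pc}_H(t_1)\le r^{pc}_H(t_2)\le\dots\le r^{pc}_H(t_s)$. Let $v_i\in V\setminus T_p$. If there is an optimal solution $S$ with $v_i\in V(S)$, then $$C(S)\ \ge\ \underline{d}(v_i,\bar v_{i,1})+\underline{d}(v_i,\bar v_{i,2})+\sum_{k=1}^{s-2} r^{pc}_H(t_k).$$
   Context: A PCSTP instance $(V,E,c,p)$: finite undirected connected graph $G=(V,E)$, $c:E\to\mathbb{Q}_{>0}$, $p:V\to\mathbb{Q}_{\ge0}$. For a tree $S\subseteq G$ (connected acyclic subgraph with at least one vertex), $C(S):=\sum_{e\in E(S)}c(e)+\sum_{v\in V\setminus V(S)}p(v)$; an optimal solution is a tree minimizing $C$. $T_p:=\{v\in V:p(v)>0\}$. $d(u,w)$ is the shortest-path distance between $u,w$ in $G$ w.r.t. $c$. $\underline{d}(u,w)$ is the shortest-path distance between $u$ and $w$ in the subgraph of $G$ induced by $V\setminus(T_p\setminus\{u,w\})$ ($+\infty$ if none). For $v_i\in V\setminus T_p$, $\bar v_{i,1},\bar v_{i,2},\dots$ denote the potential terminals ordered by nondecreasing $\underline{d}(v_i,\cdot)$ (ties broken arbitrarily). A terminal-regions decomposition is a partition $H=\{H_t: t\in T_p\}$ of $V$ with $H_t\cap T_p=\{t\}$ and the subgraph induced by each $H_t$ connected. For $t\in T_p$, $r^{pc}_H(t):=\min\{p(t),\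 \min\{d(t,v): v\notin H_t\}\}$. *)

theory Defs
  imports "HOL-Analysis.Analysis" "HOL-Library.Extended_Real"
begin

definition graph :: "'a set \<Rightarrow> 'a set set \<Rightarrow> bool" where
  "graph V E \<longleftrightarrow> finite V \<and> (\<forall>e\<in>E. \<exists>x y. x \<noteq> y \<and> e = {x, y} \<and> x \<in> V \<and> y \<in> V)"

definition walk_in :: "'a set \<Rightarrow> 'a set set \<Rightarrow> 'a list \<Rightarrow> bool" where
  "walk_in W F xs \<longleftrightarrow> xs \<noteq> [] \<and> set xs \<subseteq> W \<and>
     (\<forall>i < length xs - 1. {xs ! i, xs ! Suc i} \<in> F)"

definition walk_cost :: "('a set \<Rightarrow> real) \<Rightarrow> 'a list \<Rightarrow> real" where
  "walk_cost c xs = (\<Sum>i < length xs - 1. c {xs ! i, xs ! Suc i})"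

text \<open>Shortest-path distance between u and w in the subgraph of (V,E) induced by
  W \<inter> V; +\<infinity> if there is no such path.\<close>
definition dist_in :: "'a set \<Rightarrow> 'a set set \<Rightarrow> ('a set \<Rightarrow> real) \<Rightarrow> 'a set \<Rightarrow> 'a \<Rightarrow> 'a \<Rightarrow> ereal" where
  "dist_in V E c W u w =
     (INF xs \<in> {xs. walk_in (W \<inter> V) E xs \<and> hd xs = u \<and> last xs = w}. ereal (walk_cost c xs))"

definition connected_graph :: "'a set \<Rightarrow> 'a set set \<Rightarrow> bool" where
  "connected_graph V E \<longleftrightarrow> (\<forall>x\<in>V. \<forall>y\<in>V. \<exists>xs. walk_in V E xs \<and> hd xs = x \<and> last xs = y)"

definition has_cycle :: "'a set set \<Rightarrow> bool" where
  "has_cycle F \<longleftrightarrow> (\<exists>xs. length xs \<ge> 3 \<and> distinct xs \<and>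
       (\<forall>i < length xs - 1. {xs ! i, xs ! Suc i} \<in> F) \<and> {last xs, hd xs} \<in> F)"

definition is_tree_in :: "'a set \<Rightarrow> 'a set set \<Rightarrow> 'a set \<Rightarrow> 'a set set \<Rightarrow> bool" where
  "is_tree_in V E VS ES \<longleftrightarrow> VS \<noteq> {} \<and> VS \<subseteq> V \<and> ES \<subseteq> E \<and> (\<forall>e\<in>ES. e \<subseteq> VS) \<and>
     connected_graph VS ES \<and> \<not> has_cycle ES"

definition pc_cost :: "'a set \<Rightarrow> ('a set \<Rightarrow> real) \<Rightarrow> ('a \<Rightarrow> real) \<Rightarrow> 'a set \<Rightarrow> 'a set set \<Rightarrow> real" where
  "pc_cost V c p VS ES = (\<Sum>e\<in>ES. c e) + (\<Sum>v \<in> V - VS. p v)"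

definition optimal_pcstp :: "'a set \<Rightarrow> 'a set set \<Rightarrow> ('a set \<Rightarrow> real) \<Rightarrow> ('a \<Rightarrow> real) \<Rightarrow> 'a set \<Rightarrow> 'a set set \<Rightarrow> bool" where
  "optimal_pcstp V E c p VS ES \<longleftrightarrow> is_tree_in V E VS ES \<and>
     (\<forall>VS' ES'. is_tree_in V E VS' ES' \<longrightarrow> pc_cost V c p VS ES \<le> pc_cost V c p VS' ES')"

definition pcstp_instance :: "'a set \<Rightarrow> 'a set set \<Rightarrow> ('a set \<Rightarrow> real) \<Rightarrow> ('a \<Rightarrow> real) \<Rightarrow> bool" where
  "pcstp_instance V E c p \<longleftrightarrow> graph V E \<and> connected_graph V E \<and> V \<noteq> {} \<and>
     (\<forall>e\<in>E. c e \<in> \<rat> \<and> c e > 0) \<and> (\<forall>v\<in>V. p v \<in> \<rat> \<and> p v \<ge> 0)"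

definition Tp :: "'a set \<Rightarrow> ('a \<Rightarrow> real) \<Rightarrow> 'a set" where
  "Tp V p = {v \<in> V. p v > 0}"

definition dG :: "'a set \<Rightarrow> 'a set set \<Rightarrow> ('a set \<Rightarrow> real) \<Rightarrow> 'a \<Rightarrow> 'a \<Rightarrow> ereal" where
  "dG V E c u w = dist_in V E c V u w"

definition dlow :: "'a set \<Rightarrow> 'a set set \<Rightarrow> ('a set \<Rightarrow> real) \<Rightarrow> ('a \<Rightarrow> real) \<Rightarrow> 'a \<Rightarrow> 'a \<Rightarrow> ereal" where
  "dlow V E c p u w = dist_in V E c (V - (Tp V p - {u, w})) u w"

definition terminal_regions :: "'a set \<Rightarrow> 'a set set \<Rightarrow> ('a \<Rightarrow> real) \<Rightarrow> ('a \<Rightarrow> 'a set) \<Rightarrow> bool" where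
  "terminal_regions V E p H \<longleftrightarrow>
     (\<forall>t\<in>Tp V p. H t \<subseteq> V \<and> H t \<inter> Tp V p = {t} \<and>
         connected_graph (H t) {e\<in>E. e \<subseteq> H t}) \<and>
     (\<forall>t\<in>Tp V p. \<forall>t'\<in>Tp V p. t \<noteq> t' \<longrightarrow> H t \<inter> H t' = {}) \<and>
     (\<Union>t\<in>Tp V p. H t) = V"

definition rpc :: "'a set \<Rightarrow> 'a set set \<Rightarrow> ('a set \<Rightarrow> real) \<Rightarrow> ('a \<Rightarrow> real) \<Rightarrow> ('a \<Rightarrow> 'a set) \<Rightarrow> 'a \<Rightarrow> ereal" where
  "rpc V E c p H t = min (ereal (p t)) (INF v \<in> V - H t. dG V E c t v)"

end

theory Submission
  imports Defs
begin

text \<open>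
  Prune the optimal tree \<open>S\<close> leaf by leaf towards \<open>v\<close>. By optimality every leaf other than
  \<open>v\<close> is a terminal, and \<open>v\<close> has degree at least two. During the pruning every remaining vertex
  \<open>x\<close> carries a set of terminal labels; label \<open>k\<close> at \<open>x\<close> comes with a walk from \<open>x\<close> to \<open>k\<close>
  without terminals in its interior, whose cost \<open>b k\<close> is paid for by edges already pruned.
  When a leaf \<open>l\<close> is removed, one of its labels (\<open>l\<close> itself if \<open>l\<close> is a terminal, so that the
  interior stays free of terminals) moves to the neighbour of \<open>l\<close> and pays for the removed edge.
  Since the regions are disjoint, this label can be chosen so that \<open>l\<close> lies outside the regions
  of all other labels at \<open>l\<close>; their walks leave their regions and so pay for their radii, and
  they are dropped. When only \<open>v\<close> is left, the walks of two of its labels bound the two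
  restricted distances. Terminals outside \<open>S\<close> pay for their radius with their prize. Sorting
  turns the resulting bound into the stated one.
\<close>

section \<open>Sums along sorted enumerations\<close>

lemma sum_first_card_le:
  fixes g :: "nat \<Rightarrow> 'b::ordered_comm_monoid_add"
  assumes "\<And>i j. 1 \<le> i \<Longrightarrow> i \<le> j \<Longrightarrow> j \<le> n \<Longrightarrow> g i \<le> g j" and "J \<subseteq> {1..n}"
  shows "(\<Sum>k = 1..card J. g k) \<le> (\<Sum>k\<in>J. g k)"
  using assms
proof (induction n arbitrary: J)
  case 0
  then show ?case by simp
next
  case (Suc n)
  have mono: "g i \<le> g j" if "1 \<le> i" "i \<le> j" "j \<le> n" for i j
    using Suc.prems(1) that by simp
  show ?case
  proof (cases "Suc n \<in> J")
    case False
    then have "J \<subseteq> {1..n}" using Suc.prems(2) by (auto simp: le_Suc_eq)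
    then show ?thesis using Suc.IH mono by blast
  next
    case True
    define J' where "J' = J - {Suc n}"
    have J': "J' \<subseteq> {1..n}" using Suc.prems(2) unfolding J'_def by (auto simp: le_Suc_eq)
    have fin: "finite J'" using J' finite_subset by blast
    have card: "card J = Suc (card J')" using True fin unfolding J'_def
      by (metis card_Suc_Diff1 finite_insert insert_Diff)
    have "card J' \<le> n" using card_mono[OF _ J'] by simp
    then have "g (Suc (card J')) \<le> g (Suc n)" using Suc.prems(1) by simp
    then have "(\<Sum>k = 1..card J. g k) \<le> (\<Sum>k\<in>J'. g k) + g (Suc n)"
      using Suc.IH[OF mono J'] by (simp add: card add_mono)
    also have "\<dots> = (\<Sum>k\<in>J. g k)"
      using True fin unfolding J'_def by (simp add: sum.remove add.commute)
    finally show ?thesis .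
  qed
qed

lemma sorted_enumeration_sum_le:
  fixes g :: "'a \<Rightarrow> 'b::ordered_comm_monoid_add"
  assumes e: "bij_betw e {1..n} A"
    and sorted: "\<And>i j. 1 \<le> i \<Longrightarrow> i \<le> j \<Longrightarrow> j \<le> n \<Longrightarrow> g (e i) \<le> g (e j)"
    and B: "B \<subseteq> A"
  shows "(\<Sum>k = 1..card B. g (e k)) \<le> (\<Sum>t\<in>B. g t)"
proof -
  define J where "J = {k \<in> {1..n}. e k \<in> B}"
  have "bij_betw e J B"
    by (rule bij_betw_subset[OF e]) (use B e in \<open>auto simp: J_def bij_betw_def\<close>)
  then have "card J = card B" and "(\<Sum>t\<in>B. g t) = (\<Sum>k\<in>J. g (e k))"
    by (simp_all add: bij_betw_same_card sum.reindex_bij_betw)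
  moreover have "(\<Sum>k = 1..card J. g (e k)) \<le> (\<Sum>k\<in>J. g (e k))"
    using sum_first_card_le[where g = "\<lambda>k. g (e k)" and n = n and J = J] sorted unfolding J_def by blast
  ultimately show ?thesis by simp
qed

section \<open>Walks\<close>

lemma walk_in_Nil [simp]: "\<not> walk_in W F []"
  by (simp add: walk_in_def)

lemma walk_in_single [simp]: "walk_in W F [x] \<longleftrightarrow> x \<in> W"
  by (simp add: walk_in_def)

lemma walk_in_Cons2 [simp]:
  "walk_in W F (x # y # ys) \<longleftrightarrow> x \<in> W \<and> {x, y} \<in> F \<and> walk_in W F (y # ys)"
  unfolding walk_in_def by (auto simp: less_Suc_eq_0_disj)

lemma walk_cost_single [simp]: "walk_cost c [x] = 0"
  by (simp add: walk_cost_def)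

lemma walk_cost_Cons2 [simp]:
  "walk_cost c (x # y # ys) = c {x, y} + walk_cost c (y # ys)"
  unfolding walk_cost_def by (simp only: length_Cons diff_Suc_1 sum.lessThan_Suc_shift) simp

lemma walk_in_Cons:
  "xs \<noteq> [] \<Longrightarrow> walk_in W F (x # xs) \<longleftrightarrow> x \<in> W \<and> {x, hd xs} \<in> F \<and> walk_in W F xs"
  by (cases xs) auto

lemma walk_cost_Cons:
  "xs \<noteq> [] \<Longrightarrow> walk_cost c (x # xs) = c {x, hd xs} + walk_cost c xs"
  by (cases xs) auto

lemma walk_in_snoc:
  "xs \<noteq> [] \<Longrightarrow> walk_in W F (xs @ [z]) \<longleftrightarrow> walk_in W F xs \<and> z \<in> W \<and> {last xs, z} \<in> F"
  by (induction xs) (auto simp: walk_in_Cons)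

lemma walk_cost_snoc:
  "xs \<noteq> [] \<Longrightarrow> walk_cost c (xs @ [z]) = walk_cost c xs + c {last xs, z}"
  by (induction xs) (auto simp: walk_cost_Cons)

lemma walk_in_rev: "walk_in W F (rev xs) \<longleftrightarrow> walk_in W F xs"
proof (induction xs)
  case (Cons a xs)
  then show ?case
    by (cases "xs = []") (auto simp: walk_in_snoc walk_in_Cons last_rev insert_commute)
qed simp

lemma walk_cost_rev: "walk_cost c (rev xs) = walk_cost c xs"
proof (induction xs)
  case (Cons a xs)
  then show ?case
    by (cases "xs = []") (auto simp: walk_cost_snoc walk_cost_Cons last_rev insert_commute)
qed (simp add: walk_cost_def)

lemma walk_cost_nonneg:
  assumes "walk_in W F xs" "\<forall>e\<in>F. c e > 0"
  shows "walk_cost c xs \<ge> 0"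
  unfolding walk_cost_def
proof (intro sum_nonneg less_imp_le)
  fix i assume "i \<in> {..<length xs - 1}"
  then show "0 < c {xs ! i, xs ! Suc i}" using assms unfolding walk_in_def by simp
qed

lemma walk_first_edge:
  assumes "walk_in W F xs" "hd xs \<noteq> last xs"
  shows "\<exists>w. {hd xs, w} \<in> F"
proof (cases xs)
  case (Cons a ys)
  then have "ys \<noteq> []" using assms(2) by auto
  then show ?thesis using assms(1) Cons by (auto simp: walk_in_Cons)
qed (use assms in auto)

lemma set_subset_hd_last_interior:
  "xs \<noteq> [] \<Longrightarrow> set xs \<subseteq> {hd xs, last xs} \<union> set (butlast (tl xs))"
proof (induction xs rule: rev_induct)
  case (snoc x xs)
  then show ?case by (cases xs) auto
qed simp

section \<open>Trees and their leaves\<close>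

lemma graph_edgeE:
  assumes "graph V E" "e \<in> E"
  obtains x y where "x \<noteq> y" "e = {x, y}" "x \<in> V" "y \<in> V"
proof -
  have "\<exists>x y. x \<noteq> y \<and> e = {x, y} \<and> x \<in> V \<and> y \<in> V"
    using bspec[OF assms(1)[unfolded graph_def, THEN conjunct2] assms(2)] .
  then show ?thesis using that by blast
qed

lemma graph_edge_other:
  assumes "graph V E" "e \<in> E" "x \<in> e"
  shows "\<exists>y. y \<noteq> x \<and> e = {x, y}"
proof -
  obtain a b where ab: "a \<noteq> b" "e = {a, b}" by (rule graph_edgeE[OF assms(1,2)])
  show ?thesis
  proof (cases "x = a")
    case True
    then show ?thesis using ab by (intro exI[of _ b]) simp
  next
    case False
    then have "x = b" using assms(3) ab(2) by simp
    then show ?thesis using ab by (intro exI[of _ a]) (simp add: insert_commute)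
  qed
qed

lemma has_cycle_mono: "has_cycle F \<Longrightarrow> F \<subseteq> F' \<Longrightarrow> has_cycle F'"
  unfolding has_cycle_def by blast

abbreviation incident :: "'a set set \<Rightarrow> 'a \<Rightarrow> 'a set set" where
  "incident F x \<equiv> {e \<in> F. x \<in> e}"

lemma incident_card_1:
  assumes "graph V E" "F \<subseteq> E" "card (incident F x) = 1"
  shows "\<exists>y. y \<noteq> x \<and> incident F x = {{x, y}}"
proof -
  obtain e where e: "incident F x = {e}" using assms(3) by (rule card_1_singletonE)
  then have "e \<in> E" "x \<in> e" using assms(2) by auto
  then obtain y where "y \<noteq> x" "e = {x, y}" using graph_edge_other[OF assms(1)] by blast
  then show ?thesis using e by auto
qed

lemma tree_vertex_has_edge:
  assumes "is_tree_in V E VS ES" "u \<in> VS" "w \<in> VS" "u \<noteq> w"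
  shows "\<exists>z. {u, z} \<in> ES"
proof -
  obtain xs where "walk_in VS ES xs" "hd xs = u" "last xs = w"
    using assms unfolding is_tree_in_def connected_graph_def by blast
  then show ?thesis using walk_first_edge assms(4) by metis
qed

lemma walk_avoid_leaf:
  assumes leaf: "incident ES l = {{l, y}}" "y \<noteq> l"
    and "walk_in VS ES xs" "last xs \<noteq> l"
  shows "\<exists>ys. walk_in (VS - {l}) (ES - {{l, y}}) ys \<and>
    hd ys = (if hd xs = l then y else hd xs) \<and> last ys = last xs"
  using assms(3,4)
proof (induction xs)
  case (Cons x xs)
  show ?case
  proof (cases "xs = []")
    case True
    then show ?thesis using Cons.prems by (intro exI[of _ "[x]"]) auto
  next
    case False
    have w: "x \<in> VS" "{x, hd xs} \<in> ES" "walk_in VS ES xs"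
      using Cons.prems(1) False by (auto simp: walk_in_Cons)
    obtain ys where ys: "walk_in (VS - {l}) (ES - {{l, y}}) ys"
      "hd ys = (if hd xs = l then y else hd xs)" "last ys = last xs"
      using Cons.IH w(3) Cons.prems(2) False by auto
    have edge: "e \<in> ES \<Longrightarrow> l \<in> e \<Longrightarrow> e = {l, y}" for e using leaf(1) by blast
    consider "x = l" | "hd xs = l" | "x \<noteq> l" "hd xs \<noteq> l" by blast
    then show ?thesis
    proof cases
      case 1
      then have "hd xs = y" using edge w(2) leaf(2) by (metis doubleton_eq_iff insertI1)
      then show ?thesis using ys 1 False by auto
    next
      case 2
      then have "x = y" using edge w(2) by (metis doubleton_eq_iff insertI1 insert_commute)
      then show ?thesis using ys 2 False by auto
    next
      case 3
      have "ys \<noteq> []" using ys(1) by auto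
      moreover have "{x, hd xs} \<noteq> {l, y}" using 3 by (metis doubleton_eq_iff)
      ultimately show ?thesis using ys w 3 False
        by (intro exI[of _ "x # ys"]) (auto simp: walk_in_Cons)
    qed
  qed
qed simp

lemma tree_remove_leaf:
  assumes tree: "is_tree_in V E VS ES" and leaf: "l \<in> VS" "incident ES l = {{l, y}}" "y \<noteq> l"
  shows "is_tree_in V E (VS - {l}) (ES - {{l, y}})"
proof -
  have "y \<in> VS" using tree leaf(2) unfolding is_tree_in_def by blast
  moreover have "connected_graph (VS - {l}) (ES - {{l, y}})"
    unfolding connected_graph_def
  proof (intro ballI)
    fix a b assume ab: "a \<in> VS - {l}" "b \<in> VS - {l}"
    then obtain xs where "walk_in VS ES xs" "hd xs = a" "last xs = b"
      using tree unfolding is_tree_in_def connected_graph_def by blast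
    then show "\<exists>xs. walk_in (VS - {l}) (ES - {{l, y}}) xs \<and> hd xs = a \<and> last xs = b"
      using walk_avoid_leaf[OF leaf(2,3)] ab by fastforce
  qed
  moreover have "\<forall>e\<in>ES - {{l, y}}. e \<subseteq> VS - {l}"
    using tree leaf(2) unfolding is_tree_in_def by blast
  moreover have "\<not> has_cycle (ES - {{l, y}})"
    using tree has_cycle_mono[of "ES - {{l, y}}" ES] unfolding is_tree_in_def by blast
  ultimately show ?thesis
    using tree leaf(3) unfolding is_tree_in_def by (intro conjI) auto
qed

lemma distinct_walk_closing_edge_cycle:
  assumes "walk_in W F xs" "distinct xs" "j + 2 < length xs" "{last xs, xs ! j} \<in> F"
  shows "has_cycle F"
  unfolding has_cycle_def
proof (intro exI conjI)
  let ?cy = "drop j xs"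
  show "3 \<le> length ?cy" "distinct ?cy" using assms(2,3) by auto
  show "\<forall>i < length ?cy - 1. {?cy ! i, ?cy ! Suc i} \<in> F"
    using assms(1) unfolding walk_in_def by (auto simp: add.commute)
  show "{last ?cy, hd ?cy} \<in> F" using assms(3,4) by (simp add: hd_drop_conv_nth)
qed

lemma maximal_distinct_walk_end_leaf:
  assumes G: "graph V E" and "F \<subseteq> E" and acyclic: "\<not> has_cycle F"
    and walk: "walk_in W F xs" "distinct xs" "2 \<le> length xs"
    and maximal: "\<And>w. {last xs, w} \<in> F \<Longrightarrow> w \<in> set xs"
  shows "incident F (last xs) = {{last xs, xs ! (length xs - 2)}}"
proof -
  define n where "n = length xs"
  have last: "last xs = xs ! (n - 1)" using walk(3) unfolding n_def by (subst last_conv_nth) auto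
  have pred: "{xs ! (n - 2), last xs} \<in> F"
  proof -
    have "n - 2 < length xs - 1" using walk(3) unfolding n_def by simp
    then have "{xs ! (n - 2), xs ! Suc (n - 2)} \<in> F"
      using walk(1) unfolding walk_in_def by blast
    moreover have "Suc (n - 2) = n - 1" using walk(3) unfolding n_def by simp
    ultimately show ?thesis using last by simp
  qed
  have only: "e = {last xs, xs ! (n - 2)}" if e: "e \<in> F" "last xs \<in> e" for e
  proof -
    obtain w where w: "w \<noteq> last xs" "e = {last xs, w}" using graph_edge_other[OF G] e assms(2) by blast
    then have "w \<in> set xs" using maximal e by simp
    then obtain j where j: "j < n" "xs ! j = w" by (auto simp: in_set_conv_nth n_def)
    have "j \<noteq> n - 1" using j w last by auto
    moreover have "\<not> j + 2 < n"
      using distinct_walk_closing_edge_cycle[OF walk(1,2), of j] acyclic e(1) w j(2) unfolding n_def by blast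
    ultimately have "j = n - 2" using j(1) by linarith
    then show ?thesis using j w by simp
  qed
  have "{last xs, xs ! (n - 2)} \<in> F" using pred by (simp add: insert_commute)
  then show ?thesis using only unfolding n_def by blast
qed

lemma tree_exists_leaf:
  assumes G: "graph V E" and tree: "is_tree_in V E VS ES" and v: "v \<in> VS" and ne: "ES \<noteq> {}"
  shows "\<exists>l\<in>VS. \<exists>y. l \<noteq> v \<and> y \<noteq> l \<and> incident ES l = {{l, y}}"
proof -
  have "VS \<subseteq> V" using tree by (simp add: is_tree_in_def)
  moreover have "finite V" using G by (simp add: graph_def)
  ultimately have fin: "finite VS" by (rule finite_subset)
  define P where "P xs \<longleftrightarrow> walk_in VS ES xs \<and> hd xs = v \<and> distinct xs" for xs
  have bound: "\<forall>xs. P xs \<longrightarrow> length xs < card VS + 1"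
  proof (intro allI impI)
    fix xs assume "P xs"
    then have "set xs \<subseteq> VS" "distinct xs" unfolding P_def walk_in_def by auto
    then have "length xs \<le> card VS" using fin by (metis card_mono distinct_card)
    then show "length xs < card VS + 1" by simp
  qed
  have "P [v]" using v by (simp add: P_def)
  then obtain xs where xs: "P xs" and longest: "\<And>ys. P ys \<Longrightarrow> length ys \<le> length xs"
    using ex_has_greatest_nat[OF _ bound] by blast
  have maximal: "w \<in> set xs" if edge: "{last xs, w} \<in> ES" for w
  proof (rule ccontr)
    assume "w \<notin> set xs"
    moreover have "w \<in> VS" "xs \<noteq> []" using edge tree xs unfolding is_tree_in_def P_def by auto
    ultimately have "P (xs @ [w])" using xs edge unfolding P_def by (simp add: walk_in_snoc)
    then show False using longest[of "xs @ [w]"] by simp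
  qed
  have forest: "ES \<subseteq> E" "\<not> has_cycle ES" using tree by (simp_all add: is_tree_in_def)
  have len: "2 \<le> length xs"
  proof -
    obtain e where e: "e \<in> ES" using ne by blast
    then have "e \<in> E" "e \<subseteq> VS" using forest tree by (auto simp: is_tree_in_def)
    moreover obtain a b where "a \<noteq> b" "e = {a, b}" "a \<in> V" "b \<in> V"
      by (rule graph_edgeE[OF G \<open>e \<in> E\<close>])
    ultimately have "\<exists>w\<in>VS. w \<noteq> v" by auto
    then obtain u where u: "{v, u} \<in> ES" using tree_vertex_has_edge[OF tree v] by blast
    then have "{v, u} \<in> E" using forest by auto
    then obtain u' where "u' \<noteq> v" "{v, u} = {v, u'}" using graph_edge_other[OF G] by blast
    then have "u \<noteq> v" by (metis doubleton_eq_iff)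
    then have "P [v, u]" using tree v u unfolding P_def is_tree_in_def by auto
    then show ?thesis using longest[of "[v, u]"] by simp
  qed
  let ?z = "last xs" and ?z' = "xs ! (length xs - 2)"
  have walk: "walk_in VS ES xs" "distinct xs" using xs unfolding P_def by auto
  have leaf: "incident ES ?z = {{?z, ?z'}}"
    using maximal_distinct_walk_end_leaf[OF G forest walk len maximal] .
  then have "{?z, ?z'} \<in> E" using forest by auto
  then obtain y where "y \<noteq> ?z" "{?z, ?z'} = {?z, y}" using graph_edge_other[OF G] by blast
  then have "?z' \<noteq> ?z" by (metis doubleton_eq_iff)
  moreover have "?z \<in> VS" using walk(1) unfolding walk_in_def by auto
  moreover have "?z \<noteq> v"
  proof -
    have "xs ! (length xs - 1) \<noteq> xs ! 0"
      using walk(2) len by (subst nth_eq_iff_index_eq) auto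
    moreover have "xs \<noteq> []" using len by auto
    ultimately show ?thesis using xs unfolding P_def by (simp add: hd_conv_nth last_conv_nth)
  qed
  ultimately show ?thesis using leaf by blast
qed

section \<open>Walks avoiding terminals and terminal labellings\<close>

definition has_free_walk ::
  "'a set \<Rightarrow> 'a set set \<Rightarrow> ('a set \<Rightarrow> real) \<Rightarrow> ('a \<Rightarrow> real) \<Rightarrow> 'a \<Rightarrow> 'a \<Rightarrow> real \<Rightarrow> bool" where
  "has_free_walk V E c p x k \<beta> \<longleftrightarrow> (\<exists>xs. walk_in V E xs \<and> hd xs = x \<and> last xs = k \<and>
     walk_cost c xs \<le> \<beta> \<and> set (butlast (tl xs)) \<inter> Tp V p = {})"

lemma dlow_le_free_walk:
  assumes "has_free_walk V E c p u k \<beta>"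
  shows "dlow V E c p u k \<le> ereal \<beta>"
proof -
  obtain xs where xs: "walk_in V E xs" "hd xs = u" "last xs = k" "walk_cost c xs \<le> \<beta>"
    and free: "set (butlast (tl xs)) \<inter> Tp V p = {}"
    using assms unfolding has_free_walk_def by blast
  have "xs \<noteq> []" using xs(1) by auto
  then have "set xs \<subseteq> {u, k} \<union> set (butlast (tl xs))"
    using set_subset_hd_last_interior[of xs] xs(2,3) by simp
  then have "set xs \<subseteq> (V - (Tp V p - {u, k})) \<inter> V"
    using xs(1) free unfolding walk_in_def by blast
  then have "xs \<in> {xs. walk_in ((V - (Tp V p - {u, k})) \<inter> V) E xs \<and> hd xs = u \<and> last xs = k}"
    using xs(1-3) unfolding walk_in_def by blast
  then have "dlow V E c p u k \<le> ereal (walk_cost c xs)"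
    unfolding dlow_def dist_in_def by (rule INF_lower)
  also have "\<dots> \<le> ereal \<beta>" using xs(4) by simp
  finally show ?thesis .
qed

definition terminal_labelling ::
  "'a set \<Rightarrow> 'a set set \<Rightarrow> ('a set \<Rightarrow> real) \<Rightarrow> ('a \<Rightarrow> real) \<Rightarrow> 'a set \<Rightarrow> ('a \<Rightarrow> 'a set) \<Rightarrow>
    ('a \<Rightarrow> real) \<Rightarrow> bool" where
  "terminal_labelling V E c p VS K b \<longleftrightarrow>
     (\<forall>x\<in>VS. K x \<subseteq> Tp V p) \<and> disjoint_family_on K VS \<and> (\<forall>x\<in>VS \<inter> Tp V p. x \<in> K x) \<and>
     (\<forall>x\<in>VS. \<forall>k\<in>K x. has_free_walk V E c p x k (b k))"

locale pcstp =
  fixes V :: "'a set" and E :: "'a set set" and c :: "'a set \<Rightarrow> real" and p :: "'a \<Rightarrow> real"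
  assumes inst: "pcstp_instance V E c p"
begin

lemma graph: "graph V E"
  using inst by (simp add: pcstp_instance_def)

lemma finite_V: "finite V"
  using graph by (simp add: graph_def)

lemma finite_Tp: "finite (Tp V p)"
  using finite_V by (simp add: Tp_def)

lemma Tp_subset: "Tp V p \<subseteq> V"
  by (auto simp: Tp_def)

lemma cost_pos: "e \<in> E \<Longrightarrow> 0 < c e"
  using inst by (simp add: pcstp_instance_def)

lemma prize_nonneg: "x \<in> V \<Longrightarrow> 0 \<le> p x"
  using inst by (simp add: pcstp_instance_def)

lemma edge_subset:
  assumes "e \<in> E"
  shows "e \<subseteq> V"
proof -
  obtain x y where "x \<noteq> y" "e = {x, y}" "x \<in> V" "y \<in> V" by (rule graph_edgeE[OF graph assms])
  then show ?thesis by simp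
qed

lemma finite_E: "finite E"
proof -
  have "E \<subseteq> Pow V" using edge_subset by blast
  then show ?thesis using finite_V by (meson finite_Pow_iff finite_subset)
qed

lemma dG_nonneg: "0 \<le> dG V E c a b"
  unfolding dG_def dist_in_def
proof (rule INF_greatest)
  fix xs assume "xs \<in> {xs. walk_in (V \<inter> V) E xs \<and> hd xs = a \<and> last xs = b}"
  then have "walk_in V E xs" by simp
  moreover have "\<forall>e\<in>E. 0 < c e" using cost_pos by blast
  ultimately show "0 \<le> ereal (walk_cost c xs)" by (simp add: walk_cost_nonneg)
qed

lemma free_walk_nonneg:
  assumes "has_free_walk V E c p x k \<beta>"
  shows "0 \<le> \<beta>"
proof -
  obtain xs where "walk_in V E xs" "walk_cost c xs \<le> \<beta>"
    using assms unfolding has_free_walk_def by blast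
  moreover have "0 \<le> walk_cost c xs" using walk_cost_nonneg calculation(1) cost_pos by blast
  ultimately show ?thesis by linarith
qed

lemma free_walk_Cons:
  assumes walk: "has_free_walk V E c p y k \<beta>" and edge: "{x, y} \<in> E" and free: "k = y \<or> y \<notin> Tp V p"
  shows "has_free_walk V E c p x k (\<beta> + c {x, y})"
proof -
  have xV: "x \<in> V" and yV: "y \<in> V" using edge_subset[OF edge] by auto
  show ?thesis
  proof (cases "k = y")
    case True
    have "walk_in V E [x, y]" using xV yV edge by simp
    moreover have "c {x, y} \<le> \<beta> + c {x, y}" using free_walk_nonneg[OF walk] by simp
    ultimately show ?thesis using True unfolding has_free_walk_def by (intro exI[of _ "[x, y]"]) simp
  next
    case False
    then have yT: "y \<notin> Tp V p" using free by blast
    obtain xs where xs: "walk_in V E xs" "hd xs = y" "last xs = k" "walk_cost c xs \<le> \<beta>"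
      "set (butlast (tl xs)) \<inter> Tp V p = {}"
      using walk unfolding has_free_walk_def by blast
    have ne: "xs \<noteq> []" using xs(1) by auto
    have "tl xs \<noteq> []" using ne xs(2,3) False by (cases xs) auto
    then have "butlast (tl (x # xs)) = y # butlast (tl xs)" using ne xs(2) by (cases xs) auto
    moreover have "walk_in V E (x # xs)" using ne xs(1,2) xV edge by (simp add: walk_in_Cons)
    moreover have "walk_cost c (x # xs) = c {x, y} + walk_cost c xs"
      using ne xs(2) by (simp add: walk_cost_Cons)
    ultimately show ?thesis using xs ne yT unfolding has_free_walk_def
      by (intro exI[of _ "x # xs"]) auto
  qed
qed

lemma terminal_labelling_move_leaf:
  assumes lab: "terminal_labelling V E c p VS K b" and l: "l \<in> VS"
    and y: "y \<in> VS" "y \<noteq> l" and edge: "{l, y} \<in> E"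
    and \<kappa>: "\<kappa> \<in> K l" "\<kappa> = l \<or> l \<notin> Tp V p"
  shows "terminal_labelling V E c p (VS - {l}) (K(y := K y \<union> {\<kappa>})) (b(\<kappa> := b \<kappa> + c {l, y}))"
proof -
  let ?K = "K(y := K y \<union> {\<kappa>})" and ?b = "b(\<kappa> := b \<kappa> + c {l, y})"
  have terminals: "\<forall>x\<in>VS. K x \<subseteq> Tp V p" and disj: "disjoint_family_on K VS"
    and own: "\<forall>x\<in>VS \<inter> Tp V p. x \<in> K x" and walks: "\<forall>x\<in>VS. \<forall>k\<in>K x. has_free_walk V E c p x k (b k)"
    using lab unfolding terminal_labelling_def by auto
  have \<kappa>_elsewhere: "\<kappa> \<notin> K x" if "x \<in> VS" "x \<noteq> l" for x
    using disj \<kappa>(1) l that unfolding disjoint_family_on_def by blast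
  have "disjoint_family_on ?K (VS - {l})"
    using disj \<kappa>_elsewhere unfolding disjoint_family_on_def by auto
  moreover have "has_free_walk V E c p x k (?b k)" if "x \<in> VS - {l}" "k \<in> ?K x" for x k
  proof (cases "k = \<kappa>")
    case True
    then have "x = y" using that \<kappa>_elsewhere by (auto split: if_splits)
    moreover have "has_free_walk V E c p y \<kappa> (b \<kappa> + c {y, l})"
      using free_walk_Cons[of l \<kappa> "b \<kappa>" y] walks l \<kappa> edge by (simp add: insert_commute)
    ultimately show ?thesis using True by (simp add: insert_commute)
  next
    case False
    then show ?thesis using that walks by (auto split: if_splits)
  qed
  ultimately show ?thesis
    using terminals own \<kappa>(1) l unfolding terminal_labelling_def by auto
qed

lemma prune_leaf_degrees:
  assumes lab: "terminal_labelling V E c p VS K b" and "finite ES"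
    and l: "l \<in> VS" "l \<noteq> v" and e: "{l, y} \<in> ES" and v: "v \<in> VS" and \<kappa>: "\<kappa> \<in> K l"
    and leaves: "\<forall>x\<in>VS - {v}. card (incident ES x) = 1 \<longrightarrow> K x \<noteq> {}"
    and root: "2 \<le> card (incident ES v) + card (K v)"
  shows "\<forall>x\<in>VS - {l} - {v}. card (incident (ES - {{l, y}}) x) = 1 \<longrightarrow> (K(y := K y \<union> {\<kappa>})) x \<noteq> {}"
    and "2 \<le> card (incident (ES - {{l, y}}) v) + card ((K(y := K y \<union> {\<kappa>})) v)"
proof -
  have same: "incident (ES - {{l, y}}) x = incident ES x" if "x \<noteq> l" "x \<noteq> y" for x
    using that by auto
  show "\<forall>x\<in>VS - {l} - {v}. card (incident (ES - {{l, y}}) x) = 1 \<longrightarrow> (K(y := K y \<union> {\<kappa>})) x \<noteq> {}"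
    using leaves same by auto
  show "2 \<le> card (incident (ES - {{l, y}}) v) + card ((K(y := K y \<union> {\<kappa>})) v)"
  proof (cases "v = y")
    case True
    have "K v \<subseteq> Tp V p" "K l \<inter> K v = {}"
      using lab v l unfolding terminal_labelling_def disjoint_family_on_def by auto
    then have "card ((K(y := K y \<union> {\<kappa>})) v) = card (K v) + 1"
      using True \<kappa> finite_Tp by (simp add: finite_subset disjoint_iff)
    moreover have "card (incident (ES - {{l, y}}) v) + 1 = card (incident ES v)"
    proof -
      have "incident (ES - {{l, y}}) v = incident ES v - {{l, y}}" by auto
      moreover have "{l, y} \<in> incident ES v" "finite (incident ES v)" using True e \<open>finite ES\<close> by auto
      ultimately show ?thesis using card_Suc_Diff1 by fastforce
    qed
    ultimately show ?thesis using root by linarith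
  next
    case False
    then show ?thesis using root same[OF l(2)[symmetric] False] by simp
  qed
qed

section \<open>Shape of optimal solutions\<close>

lemma optimal_leaf_in_Tp:
  assumes opt: "optimal_pcstp V E c p VS ES" and l: "l \<in> VS" "incident ES l = {{l, y}}" "y \<noteq> l"
  shows "l \<in> Tp V p"
proof (rule ccontr)
  assume "l \<notin> Tp V p"
  have tree: "is_tree_in V E VS ES" using opt by (simp add: optimal_pcstp_def)
  then have VS: "VS \<subseteq> V" and ES: "ES \<subseteq> E" by (simp_all add: is_tree_in_def)
  then have "p l = 0" using \<open>l \<notin> Tp V p\<close> l(1) prize_nonneg[of l] by (force simp: Tp_def)
  have e: "{l, y} \<in> ES" using l(2) by blast
  have "finite ES" using ES finite_E by (rule finite_subset)
  then have edges: "(\<Sum>e\<in>ES - {{l, y}}. c e) = (\<Sum>e\<in>ES. c e) - c {l, y}"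
    using e by (simp add: sum_diff1)
  have "V - (VS - {l}) = insert l (V - VS)" using l(1) VS by blast
  then have prizes: "(\<Sum>x\<in>V - (VS - {l}). p x) = (\<Sum>x\<in>V - VS. p x)"
    using finite_V \<open>p l = 0\<close> by (simp add: sum.insert_if)
  have "pc_cost V c p VS ES \<le> pc_cost V c p (VS - {l}) (ES - {{l, y}})"
    using opt tree_remove_leaf[OF tree l] by (simp add: optimal_pcstp_def)
  moreover have "0 < c {l, y}" using e ES cost_pos by blast
  ultimately show False using edges prizes by (simp add: pc_cost_def)
qed

lemma optimal_singleton_in_Tp:
  assumes opt: "optimal_pcstp V E c p {v} ES" and t: "t \<in> Tp V p"
  shows "v \<in> Tp V p"
proof (rule ccontr)
  assume "v \<notin> Tp V p"
  have tree: "is_tree_in V E {v} ES" using opt by (simp add: optimal_pcstp_def)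
  then have v: "v \<in> V" by (simp add: is_tree_in_def)
  then have "p v = 0" using \<open>v \<notin> Tp V p\<close> prize_nonneg[of v] by (force simp: Tp_def)
  have "ES = {}"
  proof (rule ccontr)
    assume "ES \<noteq> {}"
    then obtain e where "e \<in> ES" by blast
    then have "e \<in> E" "e \<subseteq> {v}" using tree by (auto simp: is_tree_in_def)
    moreover obtain x y where "x \<noteq> y" "e = {x, y}" "x \<in> V" "y \<in> V"
      by (rule graph_edgeE[OF graph \<open>e \<in> E\<close>])
    ultimately show False by auto
  qed
  have tV: "t \<in> V" and "0 < p t" using t by (simp_all add: Tp_def)
  have "is_tree_in V E {t} {}"
    unfolding is_tree_in_def connected_graph_def has_cycle_def using tV by (auto intro!: exI[of _ "[t]"])
  then have "pc_cost V c p {v} ES \<le> pc_cost V c p {t} {}"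
    using opt by (simp add: optimal_pcstp_def)
  moreover have "pc_cost V c p {v} ES = (\<Sum>x\<in>V. p x)"
    using \<open>ES = {}\<close> \<open>p v = 0\<close> v finite_V by (simp add: pc_cost_def sum_diff1)
  moreover have "pc_cost V c p {t} {} = (\<Sum>x\<in>V. p x) - p t"
    using tV finite_V by (simp add: pc_cost_def sum_diff1)
  ultimately show False using \<open>0 < p t\<close> by simp
qed

lemma optimal_root_degree:
  assumes opt: "optimal_pcstp V E c p VS ES" and v: "v \<in> VS" "v \<notin> Tp V p" and t: "t \<in> Tp V p"
  shows "2 \<le> card (incident ES v)"
proof -
  have tree: "is_tree_in V E VS ES" using opt by (simp add: optimal_pcstp_def)
  then have ES: "ES \<subseteq> E" by (simp add: is_tree_in_def)
  have "VS \<noteq> {v}" using optimal_singleton_in_Tp opt t v(2) by blast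
  then obtain x where "x \<in> VS" "x \<noteq> v" using v(1) by blast
  then obtain z where "{v, z} \<in> ES" using tree_vertex_has_edge[OF tree v(1)] by blast
  moreover have "finite ES" using ES finite_E by (rule finite_subset)
  ultimately have "card (incident ES v) \<noteq> 0" by auto
  moreover have "card (incident ES v) \<noteq> 1"
    using incident_card_1[OF graph ES] optimal_leaf_in_Tp[OF opt v(1)] v(2) by blast
  ultimately show ?thesis by linarith
qed

end

section \<open>Radii and the pruning argument\<close>

locale pcstp_regions = pcstp +
  fixes H :: "'a \<Rightarrow> 'a set"
  assumes regions: "terminal_regions V E p H"
begin

lemma region_self: "t \<in> Tp V p \<Longrightarrow> t \<in> H t"
  using regions[unfolded terminal_regions_def, THEN conjunct1] by blast

lemma region_unique: "t \<in> Tp V p \<Longrightarrow> t' \<in> Tp V p \<Longrightarrow> x \<in> H t \<Longrightarrow> x \<in> H t' \<Longrightarrow> t = t'"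
  using regions[unfolded terminal_regions_def, THEN conjunct2, THEN conjunct1] by blast

lemma ex_label_avoiding_regions:
  assumes "L \<subseteq> Tp V p" "L \<noteq> {}"
  shows "\<exists>\<kappa>\<in>L. \<forall>k\<in>L - {\<kappa>}. x \<notin> H k"
proof (cases "\<exists>k\<in>L. x \<in> H k")
  case True
  then obtain k where "k \<in> L" "x \<in> H k" by blast
  then show ?thesis using assms(1) region_unique by blast
qed (use assms(2) in blast)

definition radius :: "'a \<Rightarrow> real" where
  "radius t = real_of_ereal (rpc V E c p H t)"

lemma rpc_eq_radius:
  assumes "t \<in> Tp V p"
  shows "rpc V E c p H t = ereal (radius t)"
proof -
  have upper: "rpc V E c p H t \<le> ereal (p t)" by (simp add: rpc_def)
  have "0 \<le> (INF w \<in> V - H t. dG V E c t w)" by (rule INF_greatest) (simp add: dG_nonneg)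
  moreover have "0 \<le> p t" using assms prize_nonneg Tp_subset by blast
  ultimately have "0 \<le> rpc V E c p H t" by (simp add: rpc_def)
  with upper show ?thesis unfolding radius_def by (cases "rpc V E c p H t") auto
qed

lemma radius_le_prize:
  assumes "t \<in> Tp V p"
  shows "radius t \<le> p t"
proof -
  have "rpc V E c p H t \<le> ereal (p t)" by (simp add: rpc_def)
  then show ?thesis using rpc_eq_radius[OF assms] by simp
qed

lemma sum_radius_le_sum_prize: "(\<Sum>t\<in>Tp V p - S. radius t) \<le> (\<Sum>x\<in>V - S. p x)"
proof -
  have "(\<Sum>t\<in>Tp V p - S. radius t) \<le> (\<Sum>t\<in>Tp V p - S. p t)"
    by (intro sum_mono radius_le_prize) simp
  also have "\<dots> \<le> (\<Sum>x\<in>V - S. p x)"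
    using Tp_subset finite_V prize_nonneg by (intro sum_mono2) auto
  finally show ?thesis .
qed

lemma radius_le_free_walk:
  assumes walk: "has_free_walk V E c p x t \<beta>" and t: "t \<in> Tp V p" and x: "x \<notin> H t"
  shows "radius t \<le> \<beta>"
proof -
  obtain xs where xs: "walk_in V E xs" "hd xs = x" "last xs = t" "walk_cost c xs \<le> \<beta>"
    using walk unfolding has_free_walk_def by blast
  then have "xs \<noteq> []" "x \<in> V" by (auto simp: walk_in_def)
  then have "rev xs \<in> {xs. walk_in (V \<inter> V) E xs \<and> hd xs = t \<and> last xs = x}"
    using xs by (simp add: walk_in_rev hd_rev last_rev)
  then have "dG V E c t x \<le> ereal (walk_cost c (rev xs))"
    unfolding dG_def dist_in_def by (rule INF_lower)
  moreover have "(INF w \<in> V - H t. dG V E c t w) \<le> dG V E c t x"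
    using \<open>x \<in> V\<close> x by (intro INF_lower) simp
  ultimately have "rpc V E c p H t \<le> ereal (walk_cost c xs)"
    unfolding rpc_def walk_cost_rev by (intro min.coboundedI2) (rule order_trans)
  then show ?thesis using rpc_eq_radius[OF t] xs(4) by simp
qed

definition label_bound :: "'a \<Rightarrow> 'a set \<Rightarrow> 'a set set \<Rightarrow> ('a \<Rightarrow> 'a set) \<Rightarrow> ('a \<Rightarrow> real) \<Rightarrow> bool" where
  "label_bound v VS ES K b \<longleftrightarrow> (\<exists>\<mu>1 \<mu>2. \<mu>1 \<noteq> \<mu>2 \<and> \<mu>1 \<in> \<Union>(K ` VS) \<and> \<mu>2 \<in> \<Union>(K ` VS) \<and>
     dlow V E c p v \<mu>1 + dlow V E c p v \<mu>2 + ereal (\<Sum>t\<in>\<Union>(K ` VS) - {\<mu>1, \<mu>2}. radius t)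
       \<le> ereal ((\<Sum>e\<in>ES. c e) + (\<Sum>t\<in>\<Union>(K ` VS). b t)))"

lemma label_bound_single:
  assumes lab: "terminal_labelling V E c p {v} K b" and two: "2 \<le> card (K v)"
  shows "label_bound v {v} {} K b"
proof -
  have KT: "K v \<subseteq> Tp V p" and walks: "\<And>k. k \<in> K v \<Longrightarrow> has_free_walk V E c p v k (b k)"
    using lab by (simp_all add: terminal_labelling_def)
  have fin: "finite (K v)" using KT finite_Tp by (rule finite_subset)
  have "K v \<noteq> {}" using two by auto
  then obtain \<mu>1 where \<mu>1: "\<mu>1 \<in> K v" "\<forall>k\<in>K v - {\<mu>1}. v \<notin> H k"
    using ex_label_avoiding_regions[OF KT] by blast
  have "\<not> card (K v) \<le> Suc 0" using two by simp
  then obtain \<mu>2 where \<mu>2: "\<mu>2 \<in> K v" "\<mu>2 \<noteq> \<mu>1" using fin by (auto simp: card_le_Suc0_iff_eq)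
  let ?R = "K v - {\<mu>1, \<mu>2}"
  have "dlow V E c p v \<mu>1 \<le> ereal (b \<mu>1)" "dlow V E c p v \<mu>2 \<le> ereal (b \<mu>2)"
    using walks \<mu>1(1) \<mu>2(1) by (simp_all add: dlow_le_free_walk)
  moreover have "(\<Sum>t\<in>?R. radius t) \<le> (\<Sum>t\<in>?R. b t)"
    using \<mu>1 walks KT by (intro sum_mono radius_le_free_walk) auto
  ultimately have "dlow V E c p v \<mu>1 + dlow V E c p v \<mu>2 + ereal (\<Sum>t\<in>?R. radius t)
      \<le> ereal (b \<mu>1) + ereal (b \<mu>2) + ereal (\<Sum>t\<in>?R. b t)"
    by (intro add_mono) simp_all
  also have "\<dots> = ereal ((\<Sum>e\<in>{}. c e) + (\<Sum>t\<in>K v. b t))"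
    using fin \<mu>1(1) \<mu>2 by (simp add: sum.remove insert_Diff_if Diff_insert2 [symmetric] add.assoc)
  finally have "dlow V E c p v \<mu>1 + dlow V E c p v \<mu>2 + ereal (\<Sum>t\<in>?R. radius t)
      \<le> ereal ((\<Sum>e\<in>{}. c e) + (\<Sum>t\<in>K v. b t))" .
  then show ?thesis unfolding label_bound_def using \<mu>1(1) \<mu>2 by (intro exI[of _ \<mu>1] exI[of _ \<mu>2]) auto
qed

lemma label_bound_prune_leaf:
  assumes lab: "terminal_labelling V E c p VS K b" and "finite ES"
    and l: "l \<in> VS" and y: "y \<in> VS" "y \<noteq> l" and e: "{l, y} \<in> ES"
    and \<kappa>: "\<kappa> \<in> K l" "\<forall>k\<in>K l - {\<kappa>}. l \<notin> H k"
    and bound: "label_bound v (VS - {l}) (ES - {{l, y}}) (K(y := K y \<union> {\<kappa>})) (b(\<kappa> := b \<kappa> + c {l, y}))"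
  shows "label_bound v VS ES K b"
proof -
  let ?K' = "K(y := K y \<union> {\<kappa>})" and ?e = "{l, y}"
  define L where "L = \<Union>(K ` VS)"
  define L' where "L' = \<Union>(?K' ` (VS - {l}))"
  define D where "D = K l - {\<kappa>}"
  have terminals: "\<forall>x\<in>VS. K x \<subseteq> Tp V p" and disj: "disjoint_family_on K VS"
    and walks: "\<forall>x\<in>VS. \<forall>k\<in>K x. has_free_walk V E c p x k (b k)"
    using lab unfolding terminal_labelling_def by auto
  have L'_eq: "L' = \<Union>(K ` (VS - {l})) \<union> {\<kappa>}" unfolding L'_def using y by auto
  have "K l \<inter> \<Union>(K ` (VS - {l})) = {}" using disj l(1) unfolding disjoint_family_on_def by blast
  then have split: "L = L' \<union> D" "L' \<inter> D = {}" unfolding L_def L'_eq D_def using l(1) \<kappa>(1) by blast+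
  have "L \<subseteq> Tp V p" unfolding L_def using terminals by blast
  then have fin: "finite L'" "finite D" using finite_Tp split(1) finite_subset by auto
  obtain \<mu>1 \<mu>2 where \<mu>: "\<mu>1 \<noteq> \<mu>2" "\<mu>1 \<in> L'" "\<mu>2 \<in> L'"
    and IH: "dlow V E c p v \<mu>1 + dlow V E c p v \<mu>2 + ereal (\<Sum>t\<in>L' - {\<mu>1, \<mu>2}. radius t)
      \<le> ereal ((\<Sum>e\<in>ES - {?e}. c e) + (\<Sum>t\<in>L'. (b(\<kappa> := b \<kappa> + c ?e)) t))"
    using bound unfolding label_bound_def L'_def by blast
  have "(\<Sum>t\<in>L'. (b(\<kappa> := b \<kappa> + c ?e)) t) = (\<Sum>t\<in>L'. b t + (if t = \<kappa> then c ?e else 0))"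
    by (intro sum.cong) auto
  also have "\<dots> = (\<Sum>t\<in>L'. b t) + c ?e" using fin(1) L'_eq by (simp add: sum.distrib)
  finally have budget: "(\<Sum>e\<in>ES - {?e}. c e) + (\<Sum>t\<in>L'. (b(\<kappa> := b \<kappa> + c ?e)) t) + (\<Sum>t\<in>D. b t)
      = (\<Sum>e\<in>ES. c e) + (\<Sum>t\<in>L. b t)"
    using \<open>finite ES\<close> e split fin by (simp add: sum.remove sum.union_disjoint)
  have radii: "(\<Sum>t\<in>L - {\<mu>1, \<mu>2}. radius t) = (\<Sum>t\<in>L' - {\<mu>1, \<mu>2}. radius t) + (\<Sum>t\<in>D. radius t)"
  proof -
    have "L - {\<mu>1, \<mu>2} = (L' - {\<mu>1, \<mu>2}) \<union> D" using split \<mu>(2,3) by blast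
    moreover have "(L' - {\<mu>1, \<mu>2}) \<inter> D = {}" using split(2) by blast
    ultimately show ?thesis using fin by (simp add: sum.union_disjoint)
  qed
  have "(\<Sum>t\<in>D. radius t) \<le> (\<Sum>t\<in>D. b t)"
    using walks l \<kappa> terminals unfolding D_def by (intro sum_mono radius_le_free_walk) auto
  then have "dlow V E c p v \<mu>1 + dlow V E c p v \<mu>2 + ereal (\<Sum>t\<in>L - {\<mu>1, \<mu>2}. radius t)
      \<le> ereal ((\<Sum>e\<in>ES. c e) + (\<Sum>t\<in>L. b t))"
    using add_mono[OF IH, of "ereal (\<Sum>t\<in>D. radius t)" "ereal (\<Sum>t\<in>D. b t)"]
    unfolding radii budget[symmetric] by (simp add: add.assoc)
  then show ?thesis unfolding label_bound_def L_def[symmetric] using \<mu> split by blast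
qed

lemma label_bound_tree:
  assumes "is_tree_in V E VS ES" "v \<in> VS" "terminal_labelling V E c p VS K b"
    "\<forall>x\<in>VS - {v}. card (incident ES x) = 1 \<longrightarrow> K x \<noteq> {}"
    "2 \<le> card (incident ES v) + card (K v)"
  shows "label_bound v VS ES K b"
  using assms
proof (induction "card ES" arbitrary: VS ES K b rule: less_induct)
  case less
  note tree = less.prems(1) and v = less.prems(2) and lab = less.prems(3)
    and leaves = less.prems(4) and root = less.prems(5)
  have ES: "ES \<subseteq> E" and edges: "\<forall>e\<in>ES. e \<subseteq> VS" using tree by (simp_all add: is_tree_in_def)
  have "finite ES" using ES finite_E by (rule finite_subset)
  show ?case
  proof (cases "ES = {}")
    case True
    then have "VS = {v}" using tree_vertex_has_edge[OF tree v] v by blast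
    then show ?thesis using label_bound_single lab root True by simp
  next
    case False
    obtain l y where l: "l \<in> VS" "l \<noteq> v" "y \<noteq> l" "incident ES l = {{l, y}}"
      using tree_exists_leaf[OF graph tree v False] by blast
    then have e: "{l, y} \<in> ES" by blast
    then have y: "y \<in> VS" "{l, y} \<in> E" using edges ES by auto
    have "K l \<noteq> {}" using leaves l by simp
    moreover have "K l \<subseteq> Tp V p" using lab l(1) unfolding terminal_labelling_def by blast
    ultimately obtain \<kappa> where \<kappa>: "\<kappa> \<in> K l" "\<forall>k\<in>K l - {\<kappa>}. l \<notin> H k"
      using ex_label_avoiding_regions by blast
    have "l \<in> K l" if "l \<in> Tp V p" using lab l(1) that unfolding terminal_labelling_def by blast
    then have "\<kappa> = l \<or> l \<notin> Tp V p" using \<kappa>(2) region_self by blast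
    then have "label_bound v (VS - {l}) (ES - {{l, y}}) (K(y := K y \<union> {\<kappa>})) (b(\<kappa> := b \<kappa> + c {l, y}))"
      using less.hyps[OF card_Diff1_less[OF \<open>finite ES\<close> e] tree_remove_leaf[OF tree l(1,4,3)]]
        terminal_labelling_move_leaf[OF lab l(1) y(1) l(3) y(2) \<kappa>(1)]
        prune_leaf_degrees[OF lab \<open>finite ES\<close> l(1,2) e v \<kappa>(1) leaves root] v l(2)
      by blast
    then show ?thesis
      using label_bound_prune_leaf[OF lab \<open>finite ES\<close> l(1) y(1) l(3) e \<kappa>] by blast
  qed
qed

lemma optimal_tree_bound:
  assumes opt: "optimal_pcstp V E c p VS ES" and v: "v \<in> VS" "v \<notin> Tp V p" and t: "t \<in> Tp V p"
  shows "\<exists>\<mu>1 \<mu>2. \<mu>1 \<noteq> \<mu>2 \<and> \<mu>1 \<in> Tp V p \<and> \<mu>2 \<in> Tp V p \<and>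
    dlow V E c p v \<mu>1 + dlow V E c p v \<mu>2 + (\<Sum>t\<in>Tp V p - {\<mu>1, \<mu>2}. rpc V E c p H t)
      \<le> ereal (pc_cost V c p VS ES)"
proof -
  define K where "K x = {x} \<inter> Tp V p" for x
  have tree: "is_tree_in V E VS ES" using opt by (simp add: optimal_pcstp_def)
  then have VS: "VS \<subseteq> V" and ES: "ES \<subseteq> E" by (simp_all add: is_tree_in_def)
  have "terminal_labelling V E c p VS K (\<lambda>_. 0)"
    using VS unfolding terminal_labelling_def disjoint_family_on_def has_free_walk_def K_def
    by (auto intro!: exI[of _ "[_]"])
  moreover have "\<forall>x\<in>VS - {v}. card (incident ES x) = 1 \<longrightarrow> K x \<noteq> {}"
    using incident_card_1[OF graph ES] optimal_leaf_in_Tp[OF opt] unfolding K_def by blast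
  moreover have "2 \<le> card (incident ES v)" using optimal_root_degree[OF opt v t] .
  ultimately have "label_bound v VS ES K (\<lambda>_. 0)"
    using label_bound_tree[OF tree v(1)] by simp
  moreover have "\<Union>(K ` VS) = VS \<inter> Tp V p" unfolding K_def by auto
  ultimately obtain \<mu>1 \<mu>2 where \<mu>: "\<mu>1 \<noteq> \<mu>2" "\<mu>1 \<in> VS \<inter> Tp V p" "\<mu>2 \<in> VS \<inter> Tp V p"
    and inner: "dlow V E c p v \<mu>1 + dlow V E c p v \<mu>2 + ereal (\<Sum>t\<in>VS \<inter> Tp V p - {\<mu>1, \<mu>2}. radius t)
      \<le> ereal (\<Sum>e\<in>ES. c e)"
    unfolding label_bound_def by auto
  have "Tp V p - {\<mu>1, \<mu>2} = (VS \<inter> Tp V p - {\<mu>1, \<mu>2}) \<union> (Tp V p - VS)" using \<mu> by blast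
  then have "(\<Sum>t\<in>Tp V p - {\<mu>1, \<mu>2}. radius t)
      = (\<Sum>t\<in>VS \<inter> Tp V p - {\<mu>1, \<mu>2}. radius t) + (\<Sum>t\<in>Tp V p - VS. radius t)"
    using finite_Tp by (simp only:) (subst sum.union_disjoint; auto)
  moreover have "(\<Sum>t\<in>Tp V p - {\<mu>1, \<mu>2}. rpc V E c p H t) = ereal (\<Sum>t\<in>Tp V p - {\<mu>1, \<mu>2}. radius t)"
  proof -
    have "(\<Sum>t\<in>Tp V p - {\<mu>1, \<mu>2}. rpc V E c p H t) = (\<Sum>t\<in>Tp V p - {\<mu>1, \<mu>2}. ereal (radius t))"
      by (intro sum.cong) (simp_all add: rpc_eq_radius)
    then show ?thesis by (simp add: sum_ereal)
  qed
  ultimately show ?thesis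
    using add_mono[OF inner ereal_less_eq(3)[THEN iffD2, OF sum_radius_le_sum_prize[of VS]]] \<mu>
    unfolding pc_cost_def by (intro exI[of _ \<mu>1] exI[of _ \<mu>2]) (simp add: add.assoc)
qed

end

theorem proposition2:
  fixes V :: "'a set" and E :: "'a set set" and c :: "'a set \<Rightarrow> real" and p :: "'a \<Rightarrow> real"
    and H :: "'a \<Rightarrow> 'a set" and tt :: "nat \<Rightarrow> 'a" and vbar :: "nat \<Rightarrow> 'a"
    and v :: 'a and VS :: "'a set" and ES :: "'a set set"
  assumes inst: "pcstp_instance V E c p"
    and s2: "card (Tp V p) \<ge> 2"
    and H: "terminal_regions V E p H"
    and tt_enum: "bij_betw tt {1..card (Tp V p)} (Tp V p)"
    and tt_sorted: "\<And>i j. 1 \<le> i \<Longrightarrow> i \<le> j \<Longrightarrow> j \<le> card (Tp V p) \<Longrightarrow> rpc V E c p H (tt i) \<le> rpc V E c p H (tt j)"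
    and v: "v \<in> V - Tp V p"
    and vbar_enum: "bij_betw vbar {1..card (Tp V p)} (Tp V p)"
    and vbar_sorted: "\<And>i j. 1 \<le> i \<Longrightarrow> i \<le> j \<Longrightarrow> j \<le> card (Tp V p) \<Longrightarrow> dlow V E c p v (vbar i) \<le> dlow V E c p v (vbar j)"
    and opt: "optimal_pcstp V E c p VS ES"
    and vS: "v \<in> VS"
  shows "ereal (pc_cost V c p VS ES) \<ge>
           dlow V E c p v (vbar 1) + dlow V E c p v (vbar 2) + (\<Sum>k = 1..card (Tp V p) - 2. rpc V E c p H (tt k))"
proof -
  interpret pcstp_regions V E c p H by unfold_locales (fact inst H)+
  let ?T = "Tp V p"
  obtain t where t: "t \<in> ?T" using s2 by fastforce
  obtain \<mu>1 \<mu>2 where \<mu>: "\<mu>1 \<noteq> \<mu>2" "\<mu>1 \<in> ?T" "\<mu>2 \<in> ?T"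
    and bound: "dlow V E c p v \<mu>1 + dlow V E c p v \<mu>2 + (\<Sum>t\<in>?T - {\<mu>1, \<mu>2}. rpc V E c p H t)
      \<le> ereal (pc_cost V c p VS ES)"
    using optimal_tree_bound[OF opt vS _ t] v by blast
  have "dlow V E c p v (vbar 1) + dlow V E c p v (vbar 2) \<le> dlow V E c p v \<mu>1 + dlow V E c p v \<mu>2"
    using sorted_enumeration_sum_le[OF vbar_enum, where g = "dlow V E c p v" and B = "{\<mu>1, \<mu>2}"]
      vbar_sorted \<mu> by (simp add: numeral_2_eq_2)
  moreover have "card (?T - {\<mu>1, \<mu>2}) = card ?T - 2" using \<mu> finite_Tp by (simp add: card_Diff_subset)
  then have "(\<Sum>k = 1..card ?T - 2. rpc V E c p H (tt k)) \<le> (\<Sum>t\<in>?T - {\<mu>1, \<mu>2}. rpc V E c p H t)"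
    using sorted_enumeration_sum_le[OF tt_enum, where g = "rpc V E c p H" and B = "?T - {\<mu>1, \<mu>2}"]
      tt_sorted by simp
  ultimately show ?thesis using bound by (meson add_mono order_trans)
qed

end
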